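(* Let $Y$ be a set of vectors in a finite-dimensional real vector space which is disconnected, with decomposition $(Y_1,Y_2)$, and suppose that for each $i\in\{1,2\}$, every triple of vectors in $Y_i$ is contained in a full subset of $Y_i$ every subset of which is clean. Then every triple of vectors in $Y$ is contained in a full subset of $Y$ every subset of which is clean.
   Context: $\mathrm{Span}_+$ denotes nonnegative linear combinations. For a set $Z$ of vectors and $B\subseteq Z$: $B$ is closed in $Z$ if $\alpha,\beta\in B$, $\gamma\in\mathrm{Span}_+(\alpha,\beta)\cap Z$ imply $\gamma\in B$; coclosed if $Z\setminus B$ is closed; biclosed if both; weakly separable in $Z$ if $\mathrm{Span}_+(B)\cap\mathrm{Span}_+(Z\setminus B)=\{0\}$. $Z$ is clean if every subset biclosed in $Z$ is weakly separable in $Z$. A subset $F\subseteq Y$ is full in $Y$ if $F\cap\mathrm{Span}\{\alpha,\beta\}=Y\cap\mathrm{Span}\{\alpha,\beta\}$ for all $\alpha,\beta\in F$. $Y$ is disconnected if $Y=Y_1\sqcup Y_2$ with $Y_1,Y_2$ nonempty and both full in $Y$; $(Y_1,Y_2)$ is then a decomposition of $Y$. *)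

theory Defs
  imports "HOL-Analysis.Analysis"
begin

definition pos_span :: "'a::real_vector set \<Rightarrow> 'a set" where
  "pos_span S = {x. \<exists>T c. finite T \<and> T \<subseteq> S \<and> (\<forall>v\<in>T. c v \<ge> 0) \<and>
                        x = (\<Sum>v\<in>T. c v *\<^sub>R v)}"

definition closed_in_set :: "'a::real_vector set \<Rightarrow> 'a set \<Rightarrow> bool" where
  "closed_in_set B Z \<longleftrightarrow> B \<subseteq> Z \<and>
     (\<forall>\<alpha>\<in>B. \<forall>\<beta>\<in>B. \<forall>\<gamma>\<in>pos_span {\<alpha>, \<beta>} \<inter> Z. \<gamma> \<in> B)"

definition coclosed_in_set :: "'a::real_vector set \<Rightarrow> 'a set \<Rightarrow> bool" where
  "coclosed_in_set B Z \<longleftrightarrow> B \<subseteq> Z \<and> closed_in_set (Z - B) Z"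

definition biclosed_in_set :: "'a::real_vector set \<Rightarrow> 'a set \<Rightarrow> bool" where
  "biclosed_in_set B Z \<longleftrightarrow> closed_in_set B Z \<and> coclosed_in_set B Z"

definition weakly_separable :: "'a::real_vector set \<Rightarrow> 'a set \<Rightarrow> bool" where
  "weakly_separable B Z \<longleftrightarrow> B \<subseteq> Z \<and> pos_span B \<inter> pos_span (Z - B) = {0}"

definition clean :: "'a::real_vector set \<Rightarrow> bool" where
  "clean Z \<longleftrightarrow> (\<forall>B. B \<subseteq> Z \<longrightarrow> biclosed_in_set B Z \<longrightarrow> weakly_separable B Z)"

definition full_in :: "'a::real_vector set \<Rightarrow> 'a set \<Rightarrow> bool" where
  "full_in F Y \<longleftrightarrow> F \<subseteq> Y \<and>
     (\<forall>\<alpha>\<in>F. \<forall>\<beta>\<in>F. F \<inter> span {\<alpha>, \<beta>} = Y \<inter> span {\<alpha>, \<beta>})"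

definition decomposition :: "'a::real_vector set \<Rightarrow> 'a set \<Rightarrow> 'a set \<Rightarrow> bool" where
  "decomposition Y Y1 Y2 \<longleftrightarrow> Y = Y1 \<union> Y2 \<and> Y1 \<inter> Y2 = {} \<and> Y1 \<noteq> {} \<and> Y2 \<noteq> {} \<and>
     full_in Y1 Y \<and> full_in Y2 Y"

definition disconnected :: "'a::real_vector set \<Rightarrow> bool" where
  "disconnected Y \<longleftrightarrow> (\<exists>Y1 Y2. decomposition Y Y1 Y2)"

definition triple_property :: "'a::real_vector set \<Rightarrow> bool" where
  "triple_property Y \<longleftrightarrow> (\<forall>\<alpha>\<in>Y. \<forall>\<beta>\<in>Y. \<forall>\<gamma>\<in>Y. \<exists>F. full_in F Y \<and> {\<alpha>, \<beta>, \<gamma>} \<subseteq> F \<and>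
                             (\<forall>Z. Z \<subseteq> F \<longrightarrow> clean Z))"

end

theory Submission
  imports Defs
begin

text \<open>For a triple meeting both parts, say a, b \<in> Y1 and c \<in> Y2, the witness is
F = (Y \<inter> span {a, b}) \<union> (Y \<inter> span {c}). It is full: a vector of one part lying in the span of a
vector x of that part and a vector of the other part is a multiple of x, since otherwise the
exchange lemma and fullness of the part would pull the other vector into it. The two pieces lie
in the given full subsets of Y1 and Y2 and span subspaces meeting only in 0, and cleanness
passes to such unions because a vector in both positive cones decomposes uniquely along the
direct sum. Triples inside one part are covered by the hypothesis, as fullness is transitive.\<close>

definition hereditarily_clean :: "'a::real_vector set \<Rightarrow> bool" where
  "hereditarily_clean F \<longleftrightarrow> (\<forall>Z. Z \<subseteq> F \<longrightarrow> clean Z)"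

definition has_clean_full_superset :: "'a::real_vector set \<Rightarrow> 'a set \<Rightarrow> bool" where
  "has_clean_full_superset Y S \<longleftrightarrow> (\<exists>F. full_in F Y \<and> S \<subseteq> F \<and> hereditarily_clean F)"

lemma triple_property_iff:
  "triple_property Y \<longleftrightarrow> (\<forall>\<alpha>\<in>Y. \<forall>\<beta>\<in>Y. \<forall>\<gamma>\<in>Y. has_clean_full_superset Y {\<alpha>, \<beta>, \<gamma>})"
  unfolding triple_property_def has_clean_full_superset_def hereditarily_clean_def ..

lemma pos_span_subset_span: "pos_span A \<subseteq> span A"
proof
  fix x assume "x \<in> pos_span A"
  then obtain T c where T: "T \<subseteq> A" and x: "x = (\<Sum>v\<in>T. c v *\<^sub>R v)"
    unfolding pos_span_def by blast
  have "c v *\<^sub>R v \<in> span A" if "v \<in> T" for v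
    using T that by (intro span_scale span_base) blast
  then show "x \<in> span A"
    unfolding x by (rule span_sum)
qed

lemma zero_in_pos_span: "0 \<in> pos_span A"
  unfolding pos_span_def by (auto intro!: exI[of _ "{}"])

lemma pos_span_UnD:
  assumes "x \<in> pos_span (A \<union> B)"
  obtains u w where "u \<in> pos_span A" "w \<in> pos_span B" "x = u + w"
proof -
  from assms obtain T c where T: "finite T" "T \<subseteq> A \<union> B" "\<forall>v\<in>T. c v \<ge> 0"
    and x: "x = (\<Sum>v\<in>T. c v *\<^sub>R v)" unfolding pos_span_def by blast
  have "x = (\<Sum>v\<in>T \<inter> A. c v *\<^sub>R v) + (\<Sum>v\<in>T - A. c v *\<^sub>R v)"
    using sum.Int_Diff[OF T(1)] x by simp
  moreover have "(\<Sum>v\<in>T \<inter> A. c v *\<^sub>R v) \<in> pos_span A"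
    unfolding pos_span_def using T by (intro CollectI exI[of _ "T \<inter> A"] exI[of _ c]) auto
  moreover have "(\<Sum>v\<in>T - A. c v *\<^sub>R v) \<in> pos_span B"
    unfolding pos_span_def using T by (intro CollectI exI[of _ "T - A"] exI[of _ c]) auto
  ultimately show thesis by (rule that[rotated -1])
qed

lemma span_Int_span_singleton:
  assumes "c \<notin> span S"
  shows "span S \<inter> span {c} = {0}"
proof -
  have "v = 0" if "v \<in> span S" "v \<in> span {c}" for v
  proof -
    obtain t where t: "v = t *\<^sub>R c" using \<open>v \<in> span {c}\<close> by (auto simp: span_singleton)
    have "t = 0"
    proof (rule ccontr)
      assume "t \<noteq> 0"
      then have "c = (1 / t) *\<^sub>R v" using t by simp
      then show False using assms \<open>v \<in> span S\<close> by (metis span_scale)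
    qed
    then show ?thesis using t by simp
  qed
  then show ?thesis by (auto simp: span_zero)
qed

lemma closed_in_set_Int:
  assumes "closed_in_set B Z" "Z' \<subseteq> Z"
  shows "closed_in_set (B \<inter> Z') Z'"
  using assms unfolding closed_in_set_def by blast

lemma biclosed_in_set_Int:
  assumes "biclosed_in_set B Z" "Z' \<subseteq> Z"
  shows "biclosed_in_set (B \<inter> Z') Z'"
proof -
  have "closed_in_set ((Z - B) \<inter> Z') Z'"
    using assms closed_in_set_Int unfolding biclosed_in_set_def coclosed_in_set_def by blast
  moreover have "(Z - B) \<inter> Z' = Z' - B \<inter> Z'" using assms(2) by blast
  ultimately show ?thesis
    using assms closed_in_set_Int unfolding biclosed_in_set_def coclosed_in_set_def by auto
qed

lemma weakly_separable_Un:
  assumes ws1: "weakly_separable (B \<inter> Z1) Z1" and ws2: "weakly_separable (B \<inter> Z2) Z2"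
    and B: "B \<subseteq> Z1 \<union> Z2" and direct: "span Z1 \<inter> span Z2 = {0}"
  shows "weakly_separable B (Z1 \<union> Z2)"
proof -
  have "x = 0" if "x \<in> pos_span B" "x \<in> pos_span (Z1 \<union> Z2 - B)" for x
  proof -
    have "(B \<inter> Z1) \<union> (B \<inter> Z2) = B" "(Z1 - B \<inter> Z1) \<union> (Z2 - B \<inter> Z2) = Z1 \<union> Z2 - B"
      using B by blast+
    then have "x \<in> pos_span ((B \<inter> Z1) \<union> (B \<inter> Z2))"
      "x \<in> pos_span ((Z1 - B \<inter> Z1) \<union> (Z2 - B \<inter> Z2))"
      using that by simp_all
    then obtain u1 u2 w1 w2
      where u: "u1 \<in> pos_span (B \<inter> Z1)" "u2 \<in> pos_span (B \<inter> Z2)" "x = u1 + u2"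
        and w: "w1 \<in> pos_span (Z1 - B \<inter> Z1)" "w2 \<in> pos_span (Z2 - B \<inter> Z2)" "x = w1 + w2"
      by (elim pos_span_UnD)
    have "pos_span (B \<inter> Z1) \<subseteq> span Z1" "pos_span (Z1 - B \<inter> Z1) \<subseteq> span Z1"
      "pos_span (B \<inter> Z2) \<subseteq> span Z2" "pos_span (Z2 - B \<inter> Z2) \<subseteq> span Z2"
      by (intro order_trans[OF pos_span_subset_span span_mono]; blast)+
    then have "u1 - w1 \<in> span Z1" "w2 - u2 \<in> span Z2"
      using u w by (auto intro!: span_diff)
    moreover have "u1 - w1 = w2 - u2"
      using u(3) w(3) by (simp add: algebra_simps)
    ultimately have "u1 - w1 \<in> span Z1 \<inter> span Z2"
      by simp
    then have "u1 - w1 = 0"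
      unfolding direct by simp
    then have "u1 = w1" "u2 = w2"
      using u(3) w(3) by simp_all
    then have "u1 = 0" "u2 = 0"
      using ws1 ws2 u w unfolding weakly_separable_def by auto
    then show ?thesis using u by simp
  qed
  then show ?thesis
    unfolding weakly_separable_def using B zero_in_pos_span by blast
qed

lemma clean_Un:
  assumes "clean Z1" "clean Z2" "span Z1 \<inter> span Z2 = {0}"
  shows "clean (Z1 \<union> Z2)"
  unfolding clean_def
proof (intro allI impI)
  fix B assume "B \<subseteq> Z1 \<union> Z2" "biclosed_in_set B (Z1 \<union> Z2)"
  then have "biclosed_in_set (B \<inter> Z1) Z1" "biclosed_in_set (B \<inter> Z2) Z2"
    by (auto intro: biclosed_in_set_Int)
  then have "weakly_separable (B \<inter> Z1) Z1" "weakly_separable (B \<inter> Z2) Z2"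
    using assms(1,2) unfolding clean_def by auto
  then show "weakly_separable B (Z1 \<union> Z2)"
    using weakly_separable_Un \<open>B \<subseteq> Z1 \<union> Z2\<close> assms(3) by blast
qed

lemma hereditarily_clean_Un:
  assumes "hereditarily_clean F1" "hereditarily_clean F2" "span F1 \<inter> span F2 = {0}"
  shows "hereditarily_clean (F1 \<union> F2)"
  unfolding hereditarily_clean_def
proof (intro allI impI)
  fix Z assume Z: "Z \<subseteq> F1 \<union> F2"
  have "span (Z \<inter> F1) \<inter> span (Z \<inter> F2) \<subseteq> span F1 \<inter> span F2"
    by (intro Int_mono span_mono) auto
  then have "span (Z \<inter> F1) \<inter> span (Z \<inter> F2) = {0}"
    using assms(3) span_zero by auto
  with assms(1,2) have "clean ((Z \<inter> F1) \<union> (Z \<inter> F2))"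
    unfolding hereditarily_clean_def by (intro clean_Un) auto
  moreover have "(Z \<inter> F1) \<union> (Z \<inter> F2) = Z" using Z by blast
  ultimately show "clean Z" by simp
qed

lemma full_in_span_subset: "full_in F Y \<Longrightarrow> a \<in> F \<Longrightarrow> b \<in> F \<Longrightarrow> Y \<inter> span {a, b} \<subseteq> F"
  unfolding full_in_def by blast

lemma full_in_trans:
  assumes "full_in F Y1" "full_in Y1 Y"
  shows "full_in F Y"
  using assms unfolding full_in_def by blast

lemma full_in_Int_span: "full_in (Y \<inter> span S) Y"
  unfolding full_in_def
proof (intro conjI ballI)
  fix \<alpha> \<beta> assume "\<alpha> \<in> Y \<inter> span S" "\<beta> \<in> Y \<inter> span S"
  then have "span {\<alpha>, \<beta>} \<subseteq> span S"
    by (metis IntD2 empty_subsetI insert_subset span_mono span_span)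
  then show "Y \<inter> span S \<inter> span {\<alpha>, \<beta>} = Y \<inter> span {\<alpha>, \<beta>}" by blast
qed blast

lemma full_in_span_pair_outside:
  assumes "full_in Y1 Y" "x \<in> Y1" "d \<in> Y1" "y \<in> Y - Y1" "d \<in> span {x, y}"
  shows "d \<in> span {x}"
proof (rule ccontr)
  assume "d \<notin> span {x}"
  with assms(5) have "y \<in> span {d, x}"
    using in_span_insert[of d y "{x}"] by (simp add: insert_commute)
  then have "y \<in> Y \<inter> span {x, d}"
    using assms(4) by (simp add: insert_commute)
  then have "y \<in> Y1"
    using full_in_span_subset[OF assms(1-3)] by blast
  then show False using assms(4) by blast
qed

lemma full_in_Un_cross:
  assumes "full_in F1 Y" "full_in Y1 Y" "x \<in> F1" "F1 \<subseteq> Y1"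
    and "y \<in> Y - Y1" "d \<in> Y1" "d \<in> span {x, y}"
  shows "d \<in> F1"
proof -
  have "d \<in> span {x}"
    using full_in_span_pair_outside[OF assms(2) _ assms(6,5,7)] assms(3,4) by blast
  moreover have "d \<in> Y"
    using assms(2,6) unfolding full_in_def by blast
  ultimately show ?thesis
    using full_in_span_subset[OF assms(1,3,3)] by auto
qed

lemma full_in_Un:
  assumes dec: "decomposition Y Y1 Y2"
    and F1: "full_in F1 Y" "F1 \<subseteq> Y1" and F2: "full_in F2 Y" "F2 \<subseteq> Y2"
  shows "full_in (F1 \<union> F2) Y"
proof -
  have Y: "Y = Y1 \<union> Y2" "Y1 \<inter> Y2 = {}" and Y12: "full_in Y1 Y" "full_in Y2 Y"
    using dec unfolding decomposition_def by auto
  have cross: "d \<in> F1 \<union> F2"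
    if x: "x \<in> F1" and y: "y \<in> F2" and d: "d \<in> Y" "d \<in> span {x, y}" for x y d
  proof (cases "d \<in> Y1")
    case True
    have "y \<in> Y - Y1" using y F2(2) Y by blast
    then show ?thesis using full_in_Un_cross[OF F1(1) Y12(1) x F1(2) _ True d(2)] by blast
  next
    case False
    then have "d \<in> Y2" using d(1) Y by blast
    moreover have "x \<in> Y - Y2" using x F1(2) Y by blast
    moreover have "d \<in> span {y, x}" using d(2) by (simp add: insert_commute)
    ultimately show ?thesis using full_in_Un_cross[OF F2(1) Y12(2) y F2(2)] by blast
  qed
  have "Y \<inter> span {x, y} \<subseteq> F1 \<union> F2" if xy: "x \<in> F1 \<union> F2" "y \<in> F1 \<union> F2" for x y
  proof -
    consider "x \<in> F1" "y \<in> F1" | "x \<in> F2" "y \<in> F2" | "x \<in> F1" "y \<in> F2" | "x \<in> F2" "y \<in> F1"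
      using xy by blast
    then show ?thesis
    proof cases
      case 1
      then show ?thesis using full_in_span_subset[OF F1(1)] by blast
    next
      case 2
      then show ?thesis using full_in_span_subset[OF F2(1)] by blast
    next
      case 3
      then show ?thesis using cross[of x y] by blast
    next
      case 4
      then show ?thesis using cross[of y x] by (auto simp: insert_commute)
    qed
  qed
  moreover have "F1 \<union> F2 \<subseteq> Y"
    using F1(1) F2(1) unfolding full_in_def by blast
  ultimately show ?thesis
    unfolding full_in_def by (intro conjI ballI) blast+
qed

lemma has_clean_full_superset_mixed:
  assumes dec: "decomposition Y Y1 Y2"
    and tp1: "triple_property Y1" and tp2: "triple_property Y2"
    and a: "a \<in> Y1" and b: "b \<in> Y1" and c: "c \<in> Y2"
  shows "has_clean_full_superset Y {a, b, c}"
proof -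
  have Y: "Y = Y1 \<union> Y2" "Y1 \<inter> Y2 = {}" and Y12: "full_in Y1 Y" "full_in Y2 Y"
    using dec unfolding decomposition_def by auto
  obtain F1 where F1: "full_in F1 Y1" "{a, b, b} \<subseteq> F1" "hereditarily_clean F1"
    using tp1 a b unfolding triple_property_iff has_clean_full_superset_def by blast
  obtain F2 where F2: "full_in F2 Y2" "{c, c, c} \<subseteq> F2" "hereditarily_clean F2"
    using tp2 c unfolding triple_property_iff has_clean_full_superset_def by blast
  define P where "P = Y \<inter> span {a, b}"
  define L where "L = Y \<inter> span {c}"
  have P_Y1: "P \<subseteq> Y1"
    unfolding P_def by (rule full_in_span_subset[OF Y12(1) a b])
  have L_Y2: "L \<subseteq> Y2"
    using full_in_span_subset[OF Y12(2) c c] unfolding L_def by simp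
  have "P \<subseteq> F1"
    using P_Y1 full_in_span_subset[OF F1(1), of a b] F1(2) unfolding P_def by blast
  then have P_clean: "hereditarily_clean P"
    using F1(3) unfolding hereditarily_clean_def by blast
  have "L \<subseteq> F2"
    using L_Y2 full_in_span_subset[OF F2(1), of c c] F2(2) unfolding L_def by auto
  then have L_clean: "hereditarily_clean L"
    using F2(3) unfolding hereditarily_clean_def by blast
  have "c \<notin> span {a, b}"
    using P_Y1 c Y unfolding P_def by blast
  then have "span {a, b} \<inter> span {c} = {0}"
    by (rule span_Int_span_singleton)
  moreover have "span P \<subseteq> span {a, b}" "span L \<subseteq> span {c}"
    unfolding P_def L_def by (metis inf_le2 span_mono span_span)+
  ultimately have direct: "span P \<inter> span L = {0}"
    using span_zero by blast
  have "full_in P Y" "full_in L Y"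
    unfolding P_def L_def by (rule full_in_Int_span)+
  then have "full_in (P \<union> L) Y"
    using full_in_Un[OF dec _ P_Y1 _ L_Y2] by blast
  moreover have "{a, b, c} \<subseteq> P \<union> L"
    using a b c Y unfolding P_def L_def by (auto intro: span_base)
  moreover have "hereditarily_clean (P \<union> L)"
    by (rule hereditarily_clean_Un[OF P_clean L_clean direct])
  ultimately show ?thesis
    unfolding has_clean_full_superset_def by blast
qed

lemma has_clean_full_superset_two_in_part:
  assumes dec: "decomposition Y Y1 Y2"
    and tp1: "triple_property Y1" and tp2: "triple_property Y2"
    and a: "a \<in> Y1" and b: "b \<in> Y1" and c: "c \<in> Y"
  shows "has_clean_full_superset Y {a, b, c}"
proof (cases "c \<in> Y1")
  case True
  then obtain F where "full_in F Y1" "{a, b, c} \<subseteq> F" "hereditarily_clean F"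
    using tp1 a b unfolding triple_property_iff has_clean_full_superset_def by blast
  moreover have "full_in Y1 Y"
    using dec unfolding decomposition_def by blast
  ultimately show ?thesis
    unfolding has_clean_full_superset_def using full_in_trans by blast
next
  case False
  then have "c \<in> Y2"
    using c dec unfolding decomposition_def by blast
  then show ?thesis
    by (rule has_clean_full_superset_mixed[OF dec tp1 tp2 a b])
qed

lemma decomposition_sym: "decomposition Y Y1 Y2 \<Longrightarrow> decomposition Y Y2 Y1"
  unfolding decomposition_def by blast

lemma two_of_three_in_same_part:
  assumes "x \<in> A \<union> B" "y \<in> A \<union> B" "z \<in> A \<union> B"
  obtains a b c where "{x, y, z} = {a, b, c}" "a \<in> A \<and> b \<in> A \<or> a \<in> B \<and> b \<in> B"
proof -
  consider "x \<in> A \<and> y \<in> A \<or> x \<in> B \<and> y \<in> B" | "x \<in> A \<and> z \<in> A \<or> x \<in> B \<and> z \<in> B"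
    | "y \<in> A \<and> z \<in> A \<or> y \<in> B \<and> z \<in> B"
    using assms by blast
  then show thesis
  proof cases
    case 1
    then show thesis using that[of x y z] by blast
  next
    case 2
    then show thesis using that[of x z y] by (simp add: insert_commute)
  next
    case 3
    then show thesis using that[of y z x] by (simp add: insert_commute)
  qed
qed

theorem lemma5p2:
  fixes Y Y1 Y2 :: "'a::euclidean_space set"
  assumes "disconnected Y"
    and "decomposition Y Y1 Y2"
    and "triple_property Y1"
    and "triple_property Y2"
  shows "triple_property Y"
  unfolding triple_property_iff
proof (intro ballI)
  fix x y z assume xyz: "x \<in> Y" "y \<in> Y" "z \<in> Y"
  moreover have "Y = Y1 \<union> Y2"
    using assms(2) unfolding decomposition_def by blast
  ultimately obtain a b c where abc: "{x, y, z} = {a, b, c}"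
    and same_part: "a \<in> Y1 \<and> b \<in> Y1 \<or> a \<in> Y2 \<and> b \<in> Y2"
    by (metis two_of_three_in_same_part)
  have "c \<in> {x, y, z}"
    by (simp add: abc)
  then have "c \<in> Y"
    using xyz by blast
  then show "has_clean_full_superset Y {x, y, z}"
    unfolding abc using same_part
      has_clean_full_superset_two_in_part[OF assms(2-4)]
      has_clean_full_superset_two_in_part[OF decomposition_sym[OF assms(2)] assms(4,3)]
    by blast
qed

end
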